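(* Let $K\ge 2$ be even, $a,b\ge1$ integers, $M\ge0$. For the $(K,a,b)$ coded caching problem for location-based content, $R^\star\ge \dfrac{K}{2}-\dfrac{K}{2(2a+b)}M$.
   Context: For integers $x\le y$, $[x:y]=\{x,x+1,\dots,y\}$ and $[n]=[1:n]$. For integers $c$ and $m\ge1$, $\langle c\rangle_m$ denotes the unique element of $\{1,\dots,m\}$ congruent to $c$ modulo $m$. The $(K,a,b)$ coded caching problem for location-based content: a server has $N=K(a+b)$ files $W_1,\dots,W_N$, each consisting of $B$ independent uniformly distributed bits. There are $K$ cache nodes, each storing $MB$ bits, and $K$ users, user $k$ having free access to cache node $k$ only. For $k\in[K]$ define $\mathcal D_{k,1}=[(k-1)(a+b)+1:ka+(k-1)b]$, $\mathcal D_{k,2}=[ka+(k-1)b+1:k(a+b)]$, $\mathcal D_{k,3}=\mathcal D_{\langle k+1\rangle_K,1}$, and $\mathcal D_k=\mathcal D_{k,1}\cup\mathcal D_{k,2}\cup\mathcal D_{k,3}$. A scheme consists of: placement functions $Z_k=\phi_k(W_1,\dots,W_N)\in\{0,1\}^{MB}$, chosen without knowledge of demands; for every demand vector $\mathbf d=(d_1,\dots,d_K)\in\mathcal D_1\times\cdots\times\mathcal D_K$, a transmitted message $X=\psi(\mathbf d,W_1,\dots,W_N)\in\{0,1\}^{RB}$; and decoding functions such that user $k$ recovers $W_{d_k}$ exactly from $(\mathbf d,Z_k,X)$ for every $\mathbf d$ and $k$. $R$ is the worst-case load and $R^\star$ is the infimum of $R$ over all schemes (and all $B$). *)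

theory Defs
  imports Complex_Main
begin

(* <c>_m : the unique element of {1..m} congruent to c modulo m (m >= 1) *)
definition modpos :: "int \<Rightarrow> nat \<Rightarrow> nat" where
  "modpos c m = nat ((c - 1) mod int m) + 1"

definition Dk1 :: "nat \<Rightarrow> nat \<Rightarrow> nat \<Rightarrow> nat set" where
  "Dk1 a b k = {(k-1)*(a+b)+1 .. k*a+(k-1)*b}"

definition Dk2 :: "nat \<Rightarrow> nat \<Rightarrow> nat \<Rightarrow> nat set" where
  "Dk2 a b k = {k*a+(k-1)*b+1 .. k*(a+b)}"

definition Dk3 :: "nat \<Rightarrow> nat \<Rightarrow> nat \<Rightarrow> nat \<Rightarrow> nat set" where
  "Dk3 K a b k = Dk1 a b (modpos (int k + 1) K)"

definition Dk :: "nat \<Rightarrow> nat \<Rightarrow> nat \<Rightarrow> nat \<Rightarrow> nat set" where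
  "Dk K a b k = Dk1 a b k \<union> Dk2 a b k \<union> Dk3 K a b k"

definition libraries :: "nat \<Rightarrow> nat \<Rightarrow> nat \<Rightarrow> nat \<Rightarrow> (nat \<Rightarrow> bool list) set" where
  "libraries K a b B = {W. \<forall>n\<in>{1..K*(a+b)}. length (W n) = B}"

definition demands :: "nat \<Rightarrow> nat \<Rightarrow> nat \<Rightarrow> (nat \<Rightarrow> nat) set" where
  "demands K a b = {d. \<forall>k\<in>{1..K}. d k \<in> Dk K a b k}"

(* A scheme with file size B (bits), cache size mc \<le> M B bits and
   transmitted message of L bits (load R = L/B) exists. *)
definition achievable :: "nat \<Rightarrow> nat \<Rightarrow> nat \<Rightarrow> real \<Rightarrow> nat \<Rightarrow> nat \<Rightarrow> bool" where
  "achievable K a b M B L \<longleftrightarrow> B > 0 \<and>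
     (\<exists>(mc::nat) (phi :: nat \<Rightarrow> (nat \<Rightarrow> bool list) \<Rightarrow> bool list)
        (psi :: (nat \<Rightarrow> nat) \<Rightarrow> (nat \<Rightarrow> bool list) \<Rightarrow> bool list)
        (dec :: nat \<Rightarrow> (nat \<Rightarrow> nat) \<Rightarrow> bool list \<Rightarrow> bool list \<Rightarrow> bool list).
        real mc \<le> M * real B \<and>
        (\<forall>k\<in>{1..K}. \<forall>W\<in>libraries K a b B. length (phi k W) = mc) \<and>
        (\<forall>d\<in>demands K a b. \<forall>W\<in>libraries K a b B.
            length (psi d W) = L \<and>
            (\<forall>k\<in>{1..K}. dec k d (phi k W) (psi d W) = W (d k))))"

definition Rstar :: "nat \<Rightarrow> nat \<Rightarrow> nat \<Rightarrow> real \<Rightarrow> real" where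
  "Rstar K a b M = Inf {real L / real B | B L. achievable K a b M B L}"

end

theory Submission
  imports Defs "HOL-Library.FuncSet"
begin

(* Pair user 2i+1 with user 2i+2. The files D_{2i+1,1}, D_{2i+1,2}, D_{2i+2,1} form a block of
   2a+b consecutive indices that user 2i+1 may demand; running over 2a+b demand vectors in which
   each odd user asks for the j-th file of its block, the caches of the K/2 odd users together
   with the 2a+b messages determine all K(2a+b)/2 files of the blocks.  Counting bit strings gives
   (K/2)(2a+b) B <= (K/2) M B + (2a+b) R B. *)

lemma card_bool_lists_length: "card {xs :: bool list. length xs = n} = 2 ^ n"
  using card_lists_length_eq[of "UNIV :: bool set" n] by simp

lemma finite_bool_lists_length: "finite {xs :: bool list. length xs = n}"
  using finite_lists_length_eq[of "UNIV :: bool set" n] by simp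

lemma card_bool_list_lists:
  "card {xss. set xss \<subseteq> {xs :: bool list. length xs = n} \<and> length xss = m} = 2 ^ (n * m)"
  by (simp add: card_lists_length_eq finite_bool_lists_length card_bool_lists_length power_mult)

lemma finite_bool_list_lists:
  "finite {xss. set xss \<subseteq> {xs :: bool list. length xs = n} \<and> length xss = m}"
  by (simp add: finite_lists_length_eq finite_bool_lists_length)

lemma card_PiE_le_of_determines:
  assumes "finite S" and "finite T"
    and into: "\<And>f. f \<in> PiE S (\<lambda>_. V) \<Longrightarrow> E f \<in> T"
    and determines: "\<And>f f'. f \<in> PiE S (\<lambda>_. V) \<Longrightarrow> f' \<in> PiE S (\<lambda>_. V) \<Longrightarrow> E f = E f' \<Longrightarrow>
      \<forall>n\<in>S. f n = f' n"
  shows "card V ^ card S \<le> card T"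
proof -
  have "inj_on E (PiE S (\<lambda>_. V))"
    by (rule inj_onI) (metis PiE_ext determines)
  from card_inj_on_le[OF this _ \<open>finite T\<close>] into
  have "card (PiE S (\<lambda>_. V)) \<le> card T" by blast
  then show ?thesis using \<open>finite S\<close> by (simp add: card_PiE)
qed

lemma modpos_in_range: "K \<ge> 1 \<Longrightarrow> modpos c K \<in> {1..K}"
proof -
  assume "K \<ge> 1"
  then have "0 \<le> (c - 1) mod int K" "(c - 1) mod int K < int K" by auto
  then show ?thesis unfolding modpos_def by auto
qed

lemma Dk1_Dk2_subset_files:
  assumes "k \<in> {1..K}"
  shows "Dk1 a b k \<union> Dk2 a b k \<subseteq> {1..K * (a + b)}"
proof -
  obtain m where m: "k = Suc m" using assms by (cases k) auto
  have "Suc m * (a + b) \<le> K * (a + b)" using assms m by (intro mult_le_mono1) auto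
  then show ?thesis using m unfolding Dk1_def Dk2_def by (auto simp: algebra_simps)
qed

lemma Dk_subset_files:
  assumes "k \<in> {1..K}"
  shows "Dk K a b k \<subseteq> {1..K * (a + b)}"
proof -
  have "modpos (int k + 1) K \<in> {1..K}" using assms by (intro modpos_in_range) auto
  then show ?thesis
    unfolding Dk_def Dk3_def using Dk1_Dk2_subset_files assms by blast
qed

lemma demand_in_files:
  assumes "d \<in> demands K a b" and "k \<in> {1..K}"
  shows "d k \<in> {1..K * (a + b)}"
  using assms Dk_subset_files unfolding demands_def by blast

lemma achievable_uncoded:
  assumes "K \<ge> 1" and "M \<ge> 0"
  shows "achievable K a b M 1 K"
proof -
  define psi where "psi = (\<lambda>(d :: nat \<Rightarrow> nat) (W :: nat \<Rightarrow> bool list).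
    map (\<lambda>k. hd (W (d k))) [1..<Suc K])"
  have "[psi d W ! (k - 1)] = W (d k)"
    if "d \<in> demands K a b" "W \<in> libraries K a b 1" "k \<in> {1..K}" for d W k
  proof -
    have "length (W (d k)) = 1"
      using that demand_in_files unfolding libraries_def by blast
    moreover have "psi d W ! (k - 1) = hd (W (d k))"
      using \<open>k \<in> {1..K}\<close> unfolding psi_def by (auto simp del: upt_Suc)
    ultimately show ?thesis by (cases "W (d k)") auto
  qed
  then show ?thesis
    unfolding achievable_def using assms
    by (intro conjI exI[of _ 0] exI[of _ "\<lambda>_ _. []"] exI[of _ psi]
        exI[of _ "\<lambda>k _ _ X. [X ! (k - 1)]"]) (auto simp: psi_def)
qed

definition odd_pair_demand :: "nat \<Rightarrow> nat \<Rightarrow> nat \<Rightarrow> nat \<Rightarrow> nat" where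
  "odd_pair_demand a b j k = (if odd k then (k - 1) * (a + b) + 1 + j else (k - 1) * (a + b) + 1)"

definition pair_files :: "nat \<Rightarrow> nat \<Rightarrow> nat \<Rightarrow> nat set" where
  "pair_files a b h = (\<lambda>(i, r). 2 * i * (a + b) + 1 + r) ` ({..<h} \<times> {..<2 * a + b})"

lemma odd_pair_demand_in_demands:
  assumes "K = 2 * h" and "a \<ge> 1" and "j < 2 * a + b"
  shows "odd_pair_demand a b j \<in> demands K a b"
  unfolding demands_def
proof (intro CollectI ballI)
  fix k assume k: "k \<in> {1..K}"
  show "odd_pair_demand a b j k \<in> Dk K a b k"
  proof (cases "odd k")
    case True
    then have "k < K" using k assms(1) by (metis atLeastAtMost_iff even_mult_iff even_numeral le_neq_implies_less)
    then have next_user: "modpos (int k + 1) K = Suc k" unfolding modpos_def by simp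
    have "odd_pair_demand a b j k \<in> Dk1 a b k \<union> Dk2 a b k \<union> Dk1 a b (Suc k)"
      using True k assms(3) unfolding odd_pair_demand_def Dk1_def Dk2_def
      by (cases k) (auto simp: algebra_simps)
    then show ?thesis unfolding Dk_def Dk3_def next_user by blast
  next
    case False
    then have "odd_pair_demand a b j k \<in> Dk1 a b k"
      using k assms(2) unfolding odd_pair_demand_def Dk1_def by (cases k) (auto simp: algebra_simps)
    then show ?thesis unfolding Dk_def by blast
  qed
qed

lemma odd_pair_demand_odd_user:
  "odd_pair_demand a b r (2 * i + 1) = 2 * i * (a + b) + 1 + r"
  unfolding odd_pair_demand_def by (simp add: algebra_simps)

lemma card_pair_files: "card (pair_files a b h) = h * (2 * a + b)"
proof -
  have "inj_on (\<lambda>(i, r). 2 * i * (a + b) + 1 + r) ({..<h} \<times> {..<2 * a + b})"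
  proof (rule inj_onI, clarsimp)
    fix i r i' r'
    assume r: "r < 2 * a + b" "r' < 2 * a + b"
      and eq: "2 * i * (a + b) + r = 2 * i' * (a + b) + r'"
    define c where "c = 2 * (a + b)"
    have "r < c" "r' < c" using r unfolding c_def by auto
    have "c * i + r = c * i' + r'" using eq unfolding c_def by (simp add: algebra_simps)
    moreover have "(c * i + r) div c = i" "(c * i' + r') div c = i'"
      using \<open>r < c\<close> \<open>r' < c\<close> by simp_all
    ultimately have "i = i'" by metis
    with \<open>c * i + r = c * i' + r'\<close> show "i = i' \<and> r = r'" by simp
  qed
  then show ?thesis unfolding pair_files_def by (simp only: card_image card_cartesian_product) simp
qed

lemma pair_files_subset_files:
  assumes "K = 2 * h"
  shows "pair_files a b h \<subseteq> {1..K * (a + b)}"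
proof
  fix n assume "n \<in> pair_files a b h"
  then obtain i r where ir: "i < h" "r < 2 * a + b" "n = 2 * i * (a + b) + 1 + r"
    unfolding pair_files_def by auto
  have "2 * (i + 1) * (a + b) \<le> K * (a + b)" using ir assms by (intro mult_le_mono1) auto
  then show "n \<in> {1..K * (a + b)}" using ir by (auto simp: algebra_simps)
qed

lemma achievable_cut_set_bound:
  assumes ach: "achievable K a b M B L" and K: "K = 2 * h" and "a \<ge> 1"
  shows "real B * real h * real (2 * a + b) \<le> M * real B * real h + real L * real (2 * a + b)"
proof -
  define t where "t = 2 * a + b"
  obtain mc :: nat and phi :: "nat \<Rightarrow> (nat \<Rightarrow> bool list) \<Rightarrow> bool list"
    and psi :: "(nat \<Rightarrow> nat) \<Rightarrow> (nat \<Rightarrow> bool list) \<Rightarrow> bool list"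
    and dec :: "nat \<Rightarrow> (nat \<Rightarrow> nat) \<Rightarrow> bool list \<Rightarrow> bool list \<Rightarrow> bool list"
    where mc: "real mc \<le> M * real B"
      and phi: "\<And>k W. k \<in> {1..K} \<Longrightarrow> W \<in> libraries K a b B \<Longrightarrow> length (phi k W) = mc"
      and psi: "\<And>d W. d \<in> demands K a b \<Longrightarrow> W \<in> libraries K a b B \<Longrightarrow> length (psi d W) = L"
      and dec: "\<And>d W k. d \<in> demands K a b \<Longrightarrow> W \<in> libraries K a b B \<Longrightarrow> k \<in> {1..K} \<Longrightarrow>
        dec k d (phi k W) (psi d W) = W (d k)"
    using ach unfolding achievable_def by blast
  define S where "S = pair_files a b h"
  define V where "V = {xs :: bool list. length xs = B}"
  define ext where "ext = (\<lambda>f n. if n \<in> S then f n else replicate B False)"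
  define E where "E = (\<lambda>f. (map (\<lambda>i. phi (2 * i + 1) (ext f)) [0..<h],
    map (\<lambda>j. psi (odd_pair_demand a b j) (ext f)) [0..<t]))"
  define T where "T = {xss. set xss \<subseteq> {xs :: bool list. length xs = mc} \<and> length xss = h}
    \<times> {xss. set xss \<subseteq> {xs :: bool list. length xs = L} \<and> length xss = t}"
  have ext_lib: "ext f \<in> libraries K a b B" if "f \<in> PiE S (\<lambda>_. V)" for f
    using that pair_files_subset_files[OF K] unfolding libraries_def ext_def S_def V_def
    by (auto simp: PiE_iff)
  have odd_user: "2 * i + 1 \<in> {1..K}" if "i < h" for i using that K by auto
  have demand: "odd_pair_demand a b j \<in> demands K a b" if "j < t" for j
    using odd_pair_demand_in_demands[OF K \<open>a \<ge> 1\<close>] that unfolding t_def by blast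
  have "card V ^ card S \<le> card T"
  proof (rule card_PiE_le_of_determines)
    show "finite S" unfolding S_def pair_files_def by simp
    show "finite T" unfolding T_def by (simp add: finite_bool_list_lists)
    show "E f \<in> T" if "f \<in> PiE S (\<lambda>_. V)" for f
      using phi psi ext_lib[OF that] odd_user demand unfolding E_def T_def by auto
  next
    fix f f' assume f: "f \<in> PiE S (\<lambda>_. V)" and f': "f' \<in> PiE S (\<lambda>_. V)" and eq: "E f = E f'"
    show "\<forall>n\<in>S. f n = f' n"
    proof
      fix n assume "n \<in> S"
      then obtain i r where ir: "i < h" "r < t" and n: "n = odd_pair_demand a b r (2 * i + 1)"
        unfolding S_def pair_files_def t_def odd_pair_demand_odd_user by auto
      have "phi (2 * i + 1) (ext f) = phi (2 * i + 1) (ext f')"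
        using arg_cong[OF eq, of "\<lambda>p. fst p ! i"] ir unfolding E_def by simp
      moreover have "psi (odd_pair_demand a b r) (ext f) = psi (odd_pair_demand a b r) (ext f')"
        using arg_cong[OF eq, of "\<lambda>p. snd p ! r"] ir unfolding E_def by simp
      ultimately have "ext f n = ext f' n"
        using dec[OF demand[OF ir(2)] _ odd_user[OF ir(1)]] ext_lib[OF f] ext_lib[OF f'] n by metis
      then show "f n = f' n" using \<open>n \<in> S\<close> unfolding ext_def by simp
    qed
  qed
  then have "(2::nat) ^ (B * (h * t)) \<le> 2 ^ (mc * h + L * t)"
    unfolding T_def V_def S_def card_cartesian_product card_bool_list_lists card_bool_lists_length
      card_pair_files t_def by (simp add: power_mult power_add)
  then have "B * h * t \<le> mc * h + L * t" by (simp add: mult.assoc)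
  then have "real B * real h * real t \<le> real mc * real h + real L * real t"
    by (metis of_nat_add of_nat_le_iff of_nat_mult)
  moreover have "real mc * real h \<le> M * real B * real h" using mc by (simp add: mult_right_mono)
  ultimately show ?thesis unfolding t_def by linarith
qed

lemma achievable_load_lower_bound:
  assumes ach: "achievable K a b M B L" and K: "K = 2 * h" and "a \<ge> 1"
  shows "real K / 2 - real K / (2 * (2 * real a + real b)) * M \<le> real L / real B"
proof -
  define t where "t = 2 * real a + real b"
  have "B > 0" using ach unfolding achievable_def by blast
  have "t > 0" using \<open>a \<ge> 1\<close> unfolding t_def by simp
  have "real B * real h * t \<le> M * real B * real h + real L * t"
    using achievable_cut_set_bound[OF assms] unfolding t_def by simp
  then have "real B * real h * t - M * real B * real h \<le> real L * t" by linarith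
  then have "(real B * real h * t - M * real B * real h) / (real B * t) \<le> real L * t / (real B * t)"
    using \<open>B > 0\<close> \<open>t > 0\<close> by (intro divide_right_mono) auto
  moreover have "(real B * real h * t - M * real B * real h) / (real B * t) = real h - real h / t * M"
    using \<open>B > 0\<close> \<open>t > 0\<close> by (simp add: field_simps)
  ultimately have "real h - real h / t * M \<le> real L / real B" using \<open>t > 0\<close> by simp
  moreover have "real K / (2 * t) = real h / t" using K by simp
  ultimately show ?thesis using K unfolding t_def by simp
qed

theorem mainTheorem4:
  fixes K a b :: nat and M :: real
  assumes "K \<ge> 2" and "even K" and "a \<ge> 1" and "b \<ge> 1" and "M \<ge> 0"
  shows "Rstar K a b M \<ge> real K / 2 - real K / (2 * (2 * real a + real b)) * M"
  unfolding Rstar_def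
proof (rule cInf_greatest)
  show "{real L / real B |B L. achievable K a b M B L} \<noteq> {}"
    using achievable_uncoded[of K M a b] assms by fastforce
  obtain h where "K = 2 * h" using \<open>even K\<close> by blast
  then show "real K / 2 - real K / (2 * (2 * real a + real b)) * M \<le> x"
    if "x \<in> {real L / real B |B L. achievable K a b M B L}" for x
    using that achievable_load_lower_bound \<open>a \<ge> 1\<close> by blast
qed

end
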